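(* For every integer $d\ge3$, the family of sets $(\mathsf U_{d,s})_{s\ge1}$ is not increasing with respect to inclusion: there exist integers $1\le s<t$ such that $\mathsf U_{d,s}\not\subseteq\mathsf U_{d,t}$.
   Context: For $U\in\mathcal U(ds)$ (unitary $ds\times ds$ matrices) viewed as a $d\times d$ block matrix with blocks $U_{ij}\in M_s(\mathbb C)$, $\phi_{d,s}(U)=\big(\tfrac1s\|U_{ij}\|_F^2\big)_{i,j=1}^d$ with $\|X\|_F=\operatorname{Tr}(XX^* )^{1/2}$, and $\mathsf U_{d,s}:=\phi_{d,s}(\mathcal U(ds))$. *)

theory Defs
  imports "Jordan_Normal_Form.Matrix" "HOL.Complex"
begin

definition mat_adj :: "complex mat \<Rightarrow> complex mat" where
  "mat_adj U = mat (dim_col U) (dim_row U) (\<lambda>(i,j). cnj (U $$ (j,i)))"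

definition unitary_mats :: "nat \<Rightarrow> complex mat set" where
  "unitary_mats n = {U. U \<in> carrier_mat n n \<and> U * mat_adj U = 1\<^sub>m n \<and> mat_adj U * U = 1\<^sub>m n}"

definition block :: "nat \<Rightarrow> complex mat \<Rightarrow> nat \<Rightarrow> nat \<Rightarrow> complex mat" where
  "block s U i j = mat s s (\<lambda>(a,b). U $$ (i*s + a, j*s + b))"

definition frob_sq :: "complex mat \<Rightarrow> real" where
  "frob_sq X = Re (\<Sum>i<dim_row X. (X * mat_adj X) $$ (i,i))"

definition phi :: "nat \<Rightarrow> nat \<Rightarrow> complex mat \<Rightarrow> real mat" where
  "phi d s U = mat d d (\<lambda>(i,j). frob_sq (block s U i j) / real s)"

definition Uds :: "nat \<Rightarrow> nat \<Rightarrow> real mat set" where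
  "Uds d s = phi d s ` unitary_mats (d*s)"

end

theory Submission
  imports Defs "Jordan_Normal_Form.Schur_Decomposition"
begin

(* Let U be a unitary ds x ds matrix such that, in the pattern phi(U), the block row i is supported
   on the two blocks j and k, while the block columns j and k have no common nonzero entry outside
   row i. For A = U_ij and B = U_ik, orthonormality of the rows of U gives A A' + B B' = 1 and
   orthogonality of the columns gives A' B = 0, where ' is the adjoint. Hence A A' is idempotent,
   and s phi(U)_ij = ||A||_F^2 = tr (A A') is an integer, namely its rank.
   The doubly stochastic matrix whose upper left 3 x 3 corner is (J - I)/2 and which is the identity
   elsewhere has this shape with the entry 1/2, so it is not in U_{d,3}; yet it is phi of a
   permutation matrix for s = 2. *)

lemma sum_lessThan_mult_blocks:
  fixes f :: "nat \<Rightarrow> 'a::comm_monoid_add"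
  shows "(\<Sum>k<d*s. f k) = (\<Sum>j<d. \<Sum>c<s. f (j*s + c))"
proof -
  have "(\<Sum>c<s. f (j*s + c)) = sum f {j*s..<j*s + s}" for j
    using sum.shift_bounds_nat_ivl[of f 0 "j*s" s] by (simp add: add.commute atLeast0LessThan)
  then show ?thesis by (simp only: sum.nat_group)
qed

lemma mult_add_less_mult:
  fixes i d a s :: nat
  assumes "i < d" "a < s"
  shows "i*s + a < d*s"
proof -
  have "i*s + a < Suc i * s"
    using assms(2) by simp
  also have "\<dots> \<le> d*s"
    using assms(1) by (intro mult_le_mono1) simp
  finally show ?thesis .
qed

lemma mult_add_eq_iff: "a < s \<Longrightarrow> b < s \<Longrightarrow> i*s + a = j*s + b \<longleftrightarrow> i = j \<and> a = (b::nat)"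
proof
  assume "a < s" "b < s" "i*s + a = j*s + b"
  moreover have "(i*s + a) div s = i" "(i*s + a) mod s = a" if "a < s" for i a
    using that by simp_all
  ultimately show "i = j \<and> a = b" by metis
qed simp

lemma index_mult_mat_sum:
  "A \<in> carrier_mat m n \<Longrightarrow> B \<in> carrier_mat n p \<Longrightarrow> i < m \<Longrightarrow> j < p \<Longrightarrow>
    (A * B) $$ (i,j) = (\<Sum>k<n. A $$ (i,k) * B $$ (k,j))"
  by (auto simp: scalar_prod_def atLeast0LessThan intro!: sum.cong)

lemma mat_adj_simps [simp]:
  "dim_row (mat_adj X) = dim_col X" "dim_col (mat_adj X) = dim_row X"
  "i < dim_col X \<Longrightarrow> j < dim_row X \<Longrightarrow> mat_adj X $$ (i,j) = cnj (X $$ (j,i))"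
  by (simp_all add: mat_adj_def)

lemma mat_adj_carrier [simp]: "X \<in> carrier_mat n m \<Longrightarrow> mat_adj X \<in> carrier_mat m n"
  by (simp add: mat_adj_def)

lemma mat_adj_zero [simp]: "mat_adj (0\<^sub>m n m) = 0\<^sub>m m n"
  by (rule eq_matI) auto

definition mat_trace :: "'a::comm_monoid_add mat \<Rightarrow> 'a" where
  "mat_trace X = (\<Sum>i<dim_row X. X $$ (i,i))"

lemma mat_trace_mult_comm:
  fixes X Y :: "'a::comm_semiring_0 mat"
  assumes "X \<in> carrier_mat n m" "Y \<in> carrier_mat m n"
  shows "mat_trace (X * Y) = mat_trace (Y * X)"
proof -
  have "mat_trace (X * Y) = (\<Sum>i<n. \<Sum>k<m. X $$ (i,k) * Y $$ (k,i))"
    using assms by (simp add: mat_trace_def index_mult_mat_sum[OF assms] del: index_mult_mat(1))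
  also have "\<dots> = (\<Sum>k<m. \<Sum>i<n. Y $$ (k,i) * X $$ (i,k))"
    by (subst sum.swap) (simp add: mult.commute)
  also have "\<dots> = mat_trace (Y * X)"
    using assms by (simp add: mat_trace_def index_mult_mat_sum[OF assms(2,1)] del: index_mult_mat(1))
  finally show ?thesis .
qed

lemma similar_mat_wit_trace:
  fixes A B P Q :: "'a::comm_semiring_1 mat"
  assumes "similar_mat_wit A B P Q"
  shows "mat_trace A = mat_trace B"
proof -
  obtain n where B: "B \<in> carrier_mat n n" and P: "P \<in> carrier_mat n n" and Q: "Q \<in> carrier_mat n n"
    and QP: "Q * P = 1\<^sub>m n" and AB: "A = P * B * Q"
    using similar_mat_witD[OF refl assms] by blast
  have "mat_trace A = mat_trace (P * (B * Q))"
    using AB P B Q by (simp add: assoc_mult_mat[of _ n n _ n _ n])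
  also have "\<dots> = mat_trace (B * Q * P)"
    using P B Q by (intro mat_trace_mult_comm) auto
  also have "\<dots> = mat_trace B"
    using B Q P QP by (simp add: assoc_mult_mat[of _ n n _ n _ n])
  finally show ?thesis .
qed

lemma similar_mat_wit_idempotent:
  assumes wit: "similar_mat_wit A B P Q" and idem: "A * A = A"
  shows "B * B = B"
proof -
  obtain n where A: "A \<in> carrier_mat n n" and B: "B \<in> carrier_mat n n"
    and BA: "B = Q * A * P"
    using similar_mat_witD[OF refl similar_mat_wit_sym[OF wit]] by blast
  have sq: "M ^\<^sub>m 2 = M * M" if "M \<in> carrier_mat n n" for M :: "'a mat"
    using that by (simp add: numeral_2_eq_2)
  have "B ^\<^sub>m 2 = Q * A ^\<^sub>m 2 * P"
    by (rule similar_mat_wit_pow_id[OF similar_mat_wit_sym[OF wit]])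
  then show ?thesis
    using A B BA idem by (simp add: sq)
qed

lemma upper_triangular_idempotent_diag:
  fixes B :: "'a::idom mat"
  assumes B: "B \<in> carrier_mat n n" "upper_triangular B" and idem: "B * B = B" and i: "i < n"
  shows "B $$ (i,i) = 0 \<or> B $$ (i,i) = 1"
proof -
  have "B $$ (i,i) = (B * B) $$ (i,i)"
    using idem by simp
  also have "\<dots> = (\<Sum>k<n. B $$ (i,k) * B $$ (k,i))"
    by (rule index_mult_mat_sum[OF B(1) B(1) i i])
  also have "\<dots> = (\<Sum>k\<in>{i}. B $$ (i,k) * B $$ (k,i))"
  proof (rule sum.mono_neutral_right)
    show "\<forall>k\<in>{..<n} - {i}. B $$ (i,k) * B $$ (k,i) = 0"
    proof
      fix k assume k: "k \<in> {..<n} - {i}"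
      then consider "k < i" | "i < k" by fastforce
      then show "B $$ (i,k) * B $$ (k,i) = 0"
      proof cases
        case 1
        then show ?thesis using upper_triangularD[OF B(2) 1] B(1) i by simp
      next
        case 2
        then show ?thesis using upper_triangularD[OF B(2) 2] B(1) k by simp
      qed
    qed
  qed (use i in auto)
  also have "\<dots> = B $$ (i,i) * B $$ (i,i)"
    by simp
  finally show ?thesis
    by (metis mult_cancel_left1)
qed

lemma sum_in_Nats: "(\<And>x. x \<in> A \<Longrightarrow> f x \<in> \<nat>) \<Longrightarrow> sum f A \<in> \<nat>"
  by (induction A rule: infinite_finite_induct) simp_all

lemma idempotent_mat_trace_Nats:
  fixes P :: "complex mat"
  assumes P: "P \<in> carrier_mat n n" and idem: "P * P = P"
  shows "mat_trace P \<in> \<nat>"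
proof -
  obtain es where "char_poly P = (\<Prod>a \<leftarrow> es. [:- a, 1:])"
    using char_poly_factorized[OF P] by blast
  from schur_upper_triangular[OF P this] obtain B where
    B: "B \<in> carrier_mat n n" "upper_triangular B" "similar_mat P B" by blast
  then obtain S T where wit: "similar_mat_wit P B S T"
    unfolding similar_mat_def by blast
  have "B $$ (i,i) \<in> \<nat>" if "i < n" for i
    using upper_triangular_idempotent_diag[OF B(1,2) similar_mat_wit_idempotent[OF wit idem] that]
    by auto
  then have "mat_trace B \<in> \<nat>"
    using B(1) unfolding mat_trace_def by (auto intro: sum_in_Nats)
  then show ?thesis
    using similar_mat_wit_trace[OF wit] by simp
qed

lemma frob_sq_eq_sum:
  assumes "X \<in> carrier_mat m n"
  shows "frob_sq X = (\<Sum>i<m. \<Sum>k<n. (cmod (X $$ (i,k)))\<^sup>2)"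
proof -
  have "(X * mat_adj X) $$ (i,i) = complex_of_real (\<Sum>k<n. (cmod (X $$ (i,k)))\<^sup>2)" if "i < m" for i
    using assms that
    by (auto simp: index_mult_mat_sum[of X m n "mat_adj X" m] simp del: index_mult_mat(1)
        simp flip: complex_norm_square intro!: sum.cong)
  then show ?thesis
    using assms unfolding frob_sq_def by (simp add: Re_sum)
qed

lemma frob_sq_eq_0_iff:
  assumes X: "X \<in> carrier_mat m n"
  shows "frob_sq X = 0 \<longleftrightarrow> X = 0\<^sub>m m n"
proof
  assume "frob_sq X = 0"
  then have "(\<Sum>i<m. \<Sum>k<n. (cmod (X $$ (i,k)))\<^sup>2) = 0"
    using frob_sq_eq_sum[OF X] by simp
  then have "(cmod (X $$ (i,k)))\<^sup>2 = 0" if "i < m" "k < n" for i k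
    using that by (simp add: sum_nonneg sum_nonneg_eq_0_iff)
  then show "X = 0\<^sub>m m n"
    using X by (intro eq_matI) auto
qed (simp add: frob_sq_eq_sum[of _ m n])

lemma frob_sq_eq_trace: "frob_sq X = Re (mat_trace (X * mat_adj X))"
  by (simp add: frob_sq_def mat_trace_def)

lemma block_dim [simp]: "dim_row (block s U i j) = s" "dim_col (block s U i j) = s"
  by (simp_all add: block_def)

lemma block_carrier [simp]: "block s U i j \<in> carrier_mat s s"
  by (simp add: carrier_matI)

lemma block_index [simp]: "a < s \<Longrightarrow> b < s \<Longrightarrow> block s U i j $$ (a,b) = U $$ (i*s + a, j*s + b)"
  by (simp add: block_def)

lemma phi_dim [simp]: "dim_row (phi d s U) = d" "dim_col (phi d s U) = d"
  by (simp_all add: phi_def)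

lemma phi_index: "i < d \<Longrightarrow> j < d \<Longrightarrow> phi d s U $$ (i,j) = frob_sq (block s U i j) / real s"
  by (simp add: phi_def)

lemma phi_eq_0_imp_block_zero:
  assumes "i < d" "j < d" "phi d s U $$ (i,j) = 0"
  shows "block s U i j = 0\<^sub>m s s"
proof (cases "s = 0")
  case True
  then show ?thesis by (intro eq_matI) (auto simp: block_def)
next
  case False
  then have "frob_sq (block s U i j) = 0"
    using assms by (simp add: phi_index)
  then show ?thesis
    using frob_sq_eq_0_iff[OF block_carrier] by blast
qed

lemma unitary_block_rows:
  assumes U: "U \<in> unitary_mats (d*s)" and i: "i < d" "i' < d" and a: "a < s" "a' < s"
  shows "(\<Sum>j<d. (block s U i j * mat_adj (block s U i' j)) $$ (a,a')) =
    (if i = i' \<and> a = a' then 1 else 0)"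
proof -
  have Uc: "U \<in> carrier_mat (d*s) (d*s)" and UU: "U * mat_adj U = 1\<^sub>m (d*s)"
    using U by (auto simp: unitary_mats_def)
  have rows: "i*s + a < d*s" "i'*s + a' < d*s"
    using i a by (simp_all add: mult_add_less_mult)
  have "(\<Sum>j<d. (block s U i j * mat_adj (block s U i' j)) $$ (a,a')) =
      (\<Sum>j<d. \<Sum>c<s. U $$ (i*s + a, j*s + c) * cnj (U $$ (i'*s + a', j*s + c)))"
    using a by (auto simp: index_mult_mat_sum[of _ s s _ s] simp del: index_mult_mat(1) intro!: sum.cong)
  also have "\<dots> = (\<Sum>k<d*s. U $$ (i*s + a, k) * cnj (U $$ (i'*s + a', k)))"
    by (rule sum_lessThan_mult_blocks[symmetric])
  also have "\<dots> = (U * mat_adj U) $$ (i*s + a, i'*s + a')"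
    using Uc rows by (simp add: index_mult_mat_sum[of _ "d*s" "d*s" _ "d*s"] del: index_mult_mat(1))
  also have "\<dots> = (if i = i' \<and> a = a' then 1 else 0)"
    using UU rows a by (simp add: mult_add_eq_iff)
  finally show ?thesis .
qed

lemma unitary_block_cols:
  assumes U: "U \<in> unitary_mats (d*s)" and j: "j < d" "j' < d" and b: "b < s" "b' < s"
  shows "(\<Sum>i<d. (mat_adj (block s U i j) * block s U i j') $$ (b,b')) =
    (if j = j' \<and> b = b' then 1 else 0)"
proof -
  have Uc: "U \<in> carrier_mat (d*s) (d*s)" and UU: "mat_adj U * U = 1\<^sub>m (d*s)"
    using U by (auto simp: unitary_mats_def)
  have cols: "j*s + b < d*s" "j'*s + b' < d*s"
    using j b by (simp_all add: mult_add_less_mult)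
  have "(\<Sum>i<d. (mat_adj (block s U i j) * block s U i j') $$ (b,b')) =
      (\<Sum>i<d. \<Sum>c<s. cnj (U $$ (i*s + c, j*s + b)) * U $$ (i*s + c, j'*s + b'))"
    using b by (auto simp: index_mult_mat_sum[of _ s s _ s] simp del: index_mult_mat(1) intro!: sum.cong)
  also have "\<dots> = (\<Sum>k<d*s. cnj (U $$ (k, j*s + b)) * U $$ (k, j'*s + b'))"
    by (rule sum_lessThan_mult_blocks[symmetric])
  also have "\<dots> = (mat_adj U * U) $$ (j*s + b, j'*s + b')"
    using Uc cols by (simp add: index_mult_mat_sum[of _ "d*s" "d*s" _ "d*s"] del: index_mult_mat(1))
  also have "\<dots> = (if j = j' \<and> b = b' then 1 else 0)"
    using UU cols b by (simp add: mult_add_eq_iff)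
  finally show ?thesis .
qed

lemma mult_adj_idempotent_if_complement:
  fixes A B :: "complex mat"
  assumes A: "A \<in> carrier_mat n m" and B: "B \<in> carrier_mat n p"
    and compl: "A * mat_adj A + B * mat_adj B = 1\<^sub>m n" and orth: "mat_adj A * B = 0\<^sub>m m p"
  shows "(A * mat_adj A) * (A * mat_adj A) = A * mat_adj A"
proof -
  have Aa: "mat_adj A \<in> carrier_mat m n" and Ba: "mat_adj B \<in> carrier_mat p n"
    using A B by simp_all
  have "mat_adj A = mat_adj A * (A * mat_adj A + B * mat_adj B)"
    using compl right_mult_one_mat[OF Aa] by simp
  also have "\<dots> = mat_adj A * (A * mat_adj A) + mat_adj A * (B * mat_adj B)"
    by (rule mult_add_distrib_mat[OF Aa mult_carrier_mat[OF A Aa] mult_carrier_mat[OF B Ba]])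
  also have "\<dots> = mat_adj A * (A * mat_adj A) + (mat_adj A * B) * mat_adj B"
    by (simp add: assoc_mult_mat[OF Aa B Ba])
  also have "\<dots> = mat_adj A * (A * mat_adj A)"
    using orth carrier_matD[OF Ba] mult_carrier_mat[OF Aa mult_carrier_mat[OF A Aa]] by simp
  finally have absorb: "mat_adj A * (A * mat_adj A) = mat_adj A"
    by (rule sym)
  have "(A * mat_adj A) * (A * mat_adj A) = A * (mat_adj A * (A * mat_adj A))"
    by (simp add: assoc_mult_mat[OF A Aa mult_carrier_mat[OF A Aa]])
  then show ?thesis
    using absorb by simp
qed

lemma unitary_block_row_two_support:
  assumes U: "U \<in> unitary_mats (d*s)" and ijk: "i < d" "j < d" "k < d" "j \<noteq> k"
    and row: "\<And>l. l < d \<Longrightarrow> l \<noteq> j \<Longrightarrow> l \<noteq> k \<Longrightarrow> phi d s U $$ (i,l) = 0"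
  shows "block s U i j * mat_adj (block s U i j) + block s U i k * mat_adj (block s U i k) = 1\<^sub>m s"
proof (rule eq_matI)
  fix a a' assume "a < dim_row (1\<^sub>m s)" "a' < dim_col (1\<^sub>m s)"
  then have a: "a < s" "a' < s" by simp_all
  have "(block s U i j * mat_adj (block s U i j) + block s U i k * mat_adj (block s U i k)) $$ (a,a') =
      (\<Sum>l\<in>{j,k}. (block s U i l * mat_adj (block s U i l)) $$ (a,a'))"
    using a \<open>j \<noteq> k\<close> by simp
  also have "\<dots> = (\<Sum>l<d. (block s U i l * mat_adj (block s U i l)) $$ (a,a'))"
    using ijk row a by (intro sum.mono_neutral_left) (auto simp: phi_eq_0_imp_block_zero)
  also have "\<dots> = 1\<^sub>m s $$ (a,a')"
    using unitary_block_rows[OF U ijk(1) ijk(1) a] a by simp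
  finally show "(block s U i j * mat_adj (block s U i j) + block s U i k * mat_adj (block s U i k)) $$ (a,a')
      = 1\<^sub>m s $$ (a,a')" .
qed simp_all

lemma unitary_block_cols_orthogonal:
  assumes U: "U \<in> unitary_mats (d*s)" and ijk: "i < d" "j < d" "k < d" "j \<noteq> k"
    and cols: "\<And>m. m < d \<Longrightarrow> m \<noteq> i \<Longrightarrow> phi d s U $$ (m,j) = 0 \<or> phi d s U $$ (m,k) = 0"
  shows "mat_adj (block s U i j) * block s U i k = 0\<^sub>m s s"
proof (rule eq_matI)
  fix b b' assume "b < dim_row (0\<^sub>m s s :: complex mat)" "b' < dim_col (0\<^sub>m s s :: complex mat)"
  then have b: "b < s" "b' < s" by simp_all
  have "(mat_adj (block s U i j) * block s U i k) $$ (b,b') =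
      (\<Sum>m\<in>{i}. (mat_adj (block s U m j) * block s U m k) $$ (b,b'))"
    by simp
  also have "\<dots> = (\<Sum>m<d. (mat_adj (block s U m j) * block s U m k) $$ (b,b'))"
  proof (intro sum.mono_neutral_left ballI)
    fix m assume "m \<in> {..<d} - {i}"
    then have "block s U m j = 0\<^sub>m s s \<or> block s U m k = 0\<^sub>m s s"
      using cols[of m] ijk by (auto intro: phi_eq_0_imp_block_zero)
    then show "(mat_adj (block s U m j) * block s U m k) $$ (b,b') = 0"
      using b by auto
  qed (use ijk in auto)
  also have "\<dots> = 0"
    using unitary_block_cols[OF U ijk(2,3) b] \<open>j \<noteq> k\<close> by simp
  finally show "(mat_adj (block s U i j) * block s U i k) $$ (b,b') = 0\<^sub>m s s $$ (b,b')"
    using b by simp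
qed simp_all

lemma scaled_phi_in_Nats_if_two_block_support:
  assumes U: "U \<in> unitary_mats (d*s)" and ijk: "i < d" "j < d" "k < d" "j \<noteq> k"
    and row: "\<And>l. l < d \<Longrightarrow> l \<noteq> j \<Longrightarrow> l \<noteq> k \<Longrightarrow> phi d s U $$ (i,l) = 0"
    and cols: "\<And>m. m < d \<Longrightarrow> m \<noteq> i \<Longrightarrow> phi d s U $$ (m,j) = 0 \<or> phi d s U $$ (m,k) = 0"
  shows "real s * phi d s U $$ (i,j) \<in> \<nat>"
proof -
  define A where "A = block s U i j"
  have "(A * mat_adj A) * (A * mat_adj A) = A * mat_adj A"
    unfolding A_def
    by (rule mult_adj_idempotent_if_complement[OF block_carrier block_carrier
          unitary_block_row_two_support[OF U ijk row] unitary_block_cols_orthogonal[OF U ijk cols]])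
  moreover have "A * mat_adj A \<in> carrier_mat s s"
    by (simp add: A_def mult_carrier_mat[of _ s s])
  ultimately have "mat_trace (A * mat_adj A) \<in> \<nat>"
    by (intro idempotent_mat_trace_Nats[of _ s])
  then have "frob_sq A \<in> \<nat>"
    by (auto simp: frob_sq_eq_trace elim!: Nats_cases)
  then show ?thesis
    using ijk by (cases "s = 0") (simp_all add: phi_index A_def)
qed

definition perm_mat :: "nat \<Rightarrow> (nat \<Rightarrow> nat) \<Rightarrow> complex mat" where
  "perm_mat n f = mat n n (\<lambda>(i,j). if f i = j then 1 else 0)"

lemma perm_mat_unitary:
  assumes f: "bij_betw f {..<n} {..<n}"
  shows "perm_mat n f \<in> unitary_mats n"
proof -
  let ?P = "perm_mat n f"
  have P: "?P \<in> carrier_mat n n" and Pa: "mat_adj ?P \<in> carrier_mat n n"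
    by (simp_all add: perm_mat_def)
  have fn: "f i < n" if "i < n" for i
    using bij_betw_apply[OF f] that by blast
  have "?P * mat_adj ?P = 1\<^sub>m n"
  proof (rule eq_matI)
    fix i i' assume "i < dim_row (1\<^sub>m n)" "i' < dim_col (1\<^sub>m n)"
    then have ii: "i < n" "i' < n" by simp_all
    have "(?P * mat_adj ?P) $$ (i,i') = (\<Sum>k<n. ?P $$ (i,k) * mat_adj ?P $$ (k,i'))"
      by (rule index_mult_mat_sum[OF P Pa ii])
    also have "\<dots> = (\<Sum>k<n. if k = f i then (if f i' = k then 1 else 0) else 0)"
      using ii by (intro sum.cong) (auto simp: perm_mat_def)
    also have "\<dots> = (if f i' = f i then 1 else 0)"
      using fn[OF ii(1)] by simp
    also have "\<dots> = 1\<^sub>m n $$ (i,i')"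
      using ii bij_betw_imp_inj_on[OF f] by (auto dest: inj_onD)
    finally show "(?P * mat_adj ?P) $$ (i,i') = 1\<^sub>m n $$ (i,i')" .
  qed (simp_all add: perm_mat_def)
  moreover have "mat_adj ?P * ?P = 1\<^sub>m n"
  proof (rule eq_matI)
    fix j j' assume "j < dim_row (1\<^sub>m n)" "j' < dim_col (1\<^sub>m n)"
    then have jj: "j < n" "j' < n" by simp_all
    let ?g = "\<lambda>l. if l = j then (if l = j' then 1 else 0) else (0::complex)"
    have "(mat_adj ?P * ?P) $$ (j,j') = (\<Sum>k<n. mat_adj ?P $$ (j,k) * ?P $$ (k,j'))"
      by (rule index_mult_mat_sum[OF Pa P jj])
    also have "\<dots> = (\<Sum>k<n. ?g (f k))"
      using jj fn by (intro sum.cong) (auto simp: perm_mat_def)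
    also have "\<dots> = (\<Sum>l<n. ?g l)"
      by (rule sum.reindex_bij_betw[OF f])
    also have "\<dots> = 1\<^sub>m n $$ (j,j')"
      using jj by simp
    finally show "(mat_adj ?P * ?P) $$ (j,j') = 1\<^sub>m n $$ (j,j')" .
  qed (simp_all add: perm_mat_def)
  ultimately show ?thesis
    using P by (simp add: unitary_mats_def)
qed

lemma sum_indicator_mult_add:
  fixes x j s :: nat
  assumes "0 < s"
  shows "(\<Sum>b<s. if x = j*s + b then 1 else 0) = (of_bool (x div s = j) :: 'a::semiring_1)"
proof -
  have "x = j*s + b \<longleftrightarrow> b = x mod s \<and> x div s = j" if "b < s" for b
  proof
    assume "x = j*s + b"
    then show "b = x mod s \<and> x div s = j"
      using that by simp
  next
    assume "b = x mod s \<and> x div s = j"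
    then show "x = j*s + b"
      by (metis div_mult_mod_eq)
  qed
  then have "(\<Sum>b<s. if x = j*s + b then 1 else 0) =
      (\<Sum>b<s. if b = x mod s then of_bool (x div s = j) else (0::'a))"
    by (intro sum.cong) auto
  also have "\<dots> = of_bool (x div s = j)"
    using assms by simp
  finally show ?thesis .
qed

lemma phi_perm_mat:
  assumes ij: "i < d" "j < d"
  shows "phi d s (perm_mat (d*s) f) $$ (i,j) = (\<Sum>a<s. of_bool (f (i*s + a) div s = j)) / real s"
proof (cases "s = 0")
  case False
  have "frob_sq (block s (perm_mat (d*s) f) i j) =
      (\<Sum>a<s. \<Sum>b<s. if f (i*s + a) = j*s + b then 1 else 0)"
    using ij by (auto simp: frob_sq_eq_sum[OF block_carrier] perm_mat_def mult_add_less_mult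
        intro!: sum.cong)
  also have "\<dots> = (\<Sum>a<s. of_bool (f (i*s + a) div s = j))"
    using False by (simp add: sum_indicator_mult_add)
  finally show ?thesis
    using ij by (simp add: phi_index)
qed (use ij in \<open>simp add: phi_index\<close>)

(* Of the pairs {0,1}, {2,3}, {4,5}, each sends one element into each of the other two. *)
definition exchange_perm :: "nat \<Rightarrow> nat" where
  "exchange_perm k = (if k < 6 then [2, 4, 0, 5, 1, 3] ! k else k)"

lemma exchange_perm_involution: "exchange_perm (exchange_perm k) = k"
  unfolding exchange_perm_def by (cases "k < 6") (auto simp: less_Suc_eq nth_Cons split: nat.splits)

lemma exchange_perm_less: "k < n \<Longrightarrow> 6 \<le> n \<Longrightarrow> exchange_perm k < n"
  unfolding exchange_perm_def by (cases "k < 6") (auto simp: less_Suc_eq nth_Cons split: nat.splits)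

lemma bij_betw_exchange_perm: "6 \<le> n \<Longrightarrow> bij_betw exchange_perm {..<n} {..<n}"
  by (rule bij_betw_byWitness[where f' = exchange_perm])
    (auto simp: exchange_perm_involution exchange_perm_less)

definition half_corner_mat :: "nat \<Rightarrow> real mat" where
  "half_corner_mat d =
    mat d d (\<lambda>(i,j). if i < 3 \<and> j < 3 then (if i = j then 0 else 1/2) else of_bool (i = j))"

lemma exchange_perm_block_count:
  "(\<Sum>a<2. of_bool (exchange_perm (i*2 + a) div 2 = j)) / 2 =
    (if i < 3 \<and> j < 3 then (if i = j then 0 else 1/2) else of_bool (i = j) :: real)"
proof -
  have sum2: "(\<Sum>a<2. g a) = g 0 + g 1" for g :: "nat \<Rightarrow> real"
    by (simp add: numeral_2_eq_2)
  show ?thesis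
  proof (cases "i < 3")
    case True
    then consider "i = 0" | "i = 1" | "i = 2" by linarith
    then show ?thesis
      by cases (auto simp: sum2 exchange_perm_def)
  next
    case False
    then have "exchange_perm (i*2 + a) = i*2 + a" for a
      by (simp add: exchange_perm_def)
    then show ?thesis
      using False by (simp add: sum2)
  qed
qed

lemma phi_exchange_perm_mat: "phi d 2 (perm_mat (d*2) exchange_perm) = half_corner_mat d"
proof (rule eq_matI)
  fix i j assume "i < dim_row (half_corner_mat d)" "j < dim_col (half_corner_mat d)"
  then have ij: "i < d" "j < d"
    by (simp_all add: half_corner_mat_def)
  then show "phi d 2 (perm_mat (d*2) exchange_perm) $$ (i,j) = half_corner_mat d $$ (i,j)"
    unfolding phi_perm_mat[OF ij] of_nat_numeral exchange_perm_block_count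
    by (simp add: half_corner_mat_def)
qed (simp_all add: half_corner_mat_def)

lemma half_corner_mat_in_Uds2:
  assumes "3 \<le> d"
  shows "half_corner_mat d \<in> Uds d 2"
proof -
  have "perm_mat (d*2) exchange_perm \<in> unitary_mats (d*2)"
    using assms by (intro perm_mat_unitary bij_betw_exchange_perm) simp
  then show ?thesis
    unfolding Uds_def by (metis image_eqI phi_exchange_perm_mat)
qed

lemma half_corner_mat_notin_Uds3:
  assumes "3 \<le> d"
  shows "half_corner_mat d \<notin> Uds d 3"
proof
  assume "half_corner_mat d \<in> Uds d 3"
  then obtain U where U: "U \<in> unitary_mats (d*3)" and M: "phi d 3 U = half_corner_mat d"
    by (auto simp: Uds_def)
  have "real 3 * phi d 3 U $$ (0,1) \<in> \<nat>"
    using assms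
    by (intro scaled_phi_in_Nats_if_two_block_support[OF U, of 0 1 2]) (auto simp: M half_corner_mat_def)
  then obtain n where "3 / 2 = real n"
    using assms by (auto simp: M half_corner_mat_def elim!: Nats_cases)
  then have "3 = 2 * n"
    by linarith
  then show False
    by presburger
qed

theorem corollary3p14:
  fixes d :: nat
  assumes "d \<ge> 3"
  shows "\<exists>s t. 1 \<le> s \<and> s < t \<and> \<not> (Uds d s \<subseteq> Uds d t)"
proof (intro exI conjI)
  show "\<not> Uds d 2 \<subseteq> Uds d 3"
    using half_corner_mat_in_Uds2[OF assms] half_corner_mat_notin_Uds3[OF assms] by blast
qed simp_all

end
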